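(* Let $k,r$ be integers with $0\le r<k$, and let $G$ be a $(k+r)$-regular graph of order $n$. Then \[c_k(G)\ge \frac{(k-r)n+(r+1)r}{2k}.\] Moreover, for $r\ge 1$, a minimum $k$-conversion set $S$ of $G$ has order $\frac{(k-r)n+(r+1)r}{2k}$ if and only if $S$ is independent and $G[V-S]$ is a maximal $r$-degenerate graph.
   Context: For a graph $G=(V,E)$, a positive integer $k$ and a set $S_0\subseteq V$, the irreversible $k$-threshold conversion process is defined by: for $t=1,2,\dots$, $S_t$ is obtained from $S_{t-1}$ by adjoining all vertices having at least $k$ neighbours in $S_{t-1}$. The set $S_0$ is a $k$-conversion set if $S_t=V$ for some $t\ge0$, and $c_k(G)$ is the minimum size of a $k$-conversion set. A graph is $r$-degenerate if every induced subgraph has a vertex of degree at most $r$. A graph $H$ is maximal $r$-degenerate if it is $r$-degenerate but for every pair of non-adjacent vertices $x,y$ of $H$, the graph $H+xy$ is not $r$-degenerate. *)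

theory Defs
  imports Complex_Main
begin

definition graph :: "'a set \<Rightarrow> ('a \<Rightarrow> 'a \<Rightarrow> bool) \<Rightarrow> bool" where
  "graph V E \<longleftrightarrow> finite V \<and> (\<forall>x y. E x y \<longrightarrow> x \<in> V \<and> y \<in> V)
     \<and> (\<forall>x y. E x y \<longrightarrow> E y x) \<and> (\<forall>x. \<not> E x x)"

definition nbrs :: "'a set \<Rightarrow> ('a \<Rightarrow> 'a \<Rightarrow> bool) \<Rightarrow> 'a \<Rightarrow> 'a set" where
  "nbrs V E v = {u \<in> V. E v u}"

definition regular :: "'a set \<Rightarrow> ('a \<Rightarrow> 'a \<Rightarrow> bool) \<Rightarrow> nat \<Rightarrow> bool" where
  "regular V E d \<longleftrightarrow> (\<forall>v \<in> V. card (nbrs V E v) = d)"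

definition conv_step :: "'a set \<Rightarrow> ('a \<Rightarrow> 'a \<Rightarrow> bool) \<Rightarrow> nat \<Rightarrow> 'a set \<Rightarrow> 'a set" where
  "conv_step V E k S = S \<union> {v \<in> V. k \<le> card {u \<in> S. E v u}}"

definition conversion_set :: "'a set \<Rightarrow> ('a \<Rightarrow> 'a \<Rightarrow> bool) \<Rightarrow> nat \<Rightarrow> 'a set \<Rightarrow> bool" where
  "conversion_set V E k S \<longleftrightarrow> S \<subseteq> V \<and> (\<exists>t. (conv_step V E k ^^ t) S = V)"

definition conv_number :: "'a set \<Rightarrow> ('a \<Rightarrow> 'a \<Rightarrow> bool) \<Rightarrow> nat \<Rightarrow> nat" where
  "conv_number V E k = Min {card S | S. conversion_set V E k S}"

definition min_conversion_set :: "'a set \<Rightarrow> ('a \<Rightarrow> 'a \<Rightarrow> bool) \<Rightarrow> nat \<Rightarrow> 'a set \<Rightarrow> bool" where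
  "min_conversion_set V E k S \<longleftrightarrow> conversion_set V E k S \<and> card S = conv_number V E k"

definition independent :: "('a \<Rightarrow> 'a \<Rightarrow> bool) \<Rightarrow> 'a set \<Rightarrow> bool" where
  "independent E S \<longleftrightarrow> (\<forall>x \<in> S. \<forall>y \<in> S. \<not> E x y)"

definition degenerate :: "'a set \<Rightarrow> ('a \<Rightarrow> 'a \<Rightarrow> bool) \<Rightarrow> nat \<Rightarrow> bool" where
  "degenerate V E r \<longleftrightarrow>
     (\<forall>W. W \<subseteq> V \<and> W \<noteq> {} \<longrightarrow> (\<exists>v \<in> W. card {u \<in> W. E v u} \<le> r))"

definition add_edge :: "('a \<Rightarrow> 'a \<Rightarrow> bool) \<Rightarrow> 'a \<Rightarrow> 'a \<Rightarrow> ('a \<Rightarrow> 'a \<Rightarrow> bool)" where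
  "add_edge E x y = (\<lambda>a b. E a b \<or> (a = x \<and> b = y) \<or> (a = y \<and> b = x))"

definition maximal_degenerate :: "'a set \<Rightarrow> ('a \<Rightarrow> 'a \<Rightarrow> bool) \<Rightarrow> nat \<Rightarrow> bool" where
  "maximal_degenerate V E r \<longleftrightarrow> degenerate V E r \<and>
     (\<forall>x \<in> V. \<forall>y \<in> V. x \<noteq> y \<and> \<not> E x y \<longrightarrow> \<not> degenerate V (add_edge E x y) r)"

definition induced :: "('a \<Rightarrow> 'a \<Rightarrow> bool) \<Rightarrow> 'a set \<Rightarrow> ('a \<Rightarrow> 'a \<Rightarrow> bool)" where
  "induced E W = (\<lambda>a b. E a b \<and> a \<in> W \<and> b \<in> W)"

end

theory Submission imports Defs begin

text \<open>Let S be a k-conversion set and W = V - S. In any nonempty Y \<subseteq> W, the first vertex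
  to be converted has at least k converted neighbours outside Y, so at most r inside Y:
  G[W] is r-degenerate. An r-degenerate graph on m vertices has at most
  \<Sum>i<m. min r i edges (= r m - r (r + 1) / 2 once m \<ge> r), with equality exactly for
  the maximal ones. Counting degrees in the (k + r)-regular graph G on both sides of the
  cut (S, W) gives (k + r) |S| - 2 e(S) = (k + r) |W| - 2 e(W), and hence
  2 k |S| - (k - r) n - r (r + 1) = 2 e(S) + 2 (r |W| - r (r + 1) / 2 - e(W)) \<ge> 0, with
  equality iff S is independent and G[W] is maximal r-degenerate. If |W| < r the bound
  is strict, since n \<ge> k + r + 1.\<close>

definition degree_sum :: "('a \<Rightarrow> 'a \<Rightarrow> bool) \<Rightarrow> 'a set \<Rightarrow> nat" where
  "degree_sum F X = (\<Sum>a\<in>X. card {b\<in>X. F a b})"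

text \<open>In a degeneracy ordering the i-th vertex has at most min r i earlier neighbours.\<close>

definition max_degenerate_edges :: "nat \<Rightarrow> nat \<Rightarrow> nat" where
  "max_degenerate_edges r n = (\<Sum>i<n. min r i)"

lemma max_degenerate_edges_Suc:
  "max_degenerate_edges r (Suc n) = max_degenerate_edges r n + min r n"
  by (simp add: max_degenerate_edges_def)

lemma max_degenerate_edges_small: "n \<le> r \<Longrightarrow> 2 * max_degenerate_edges r n + n = n * n"
  by (induction n) (auto simp: max_degenerate_edges_Suc max_degenerate_edges_def)

lemma max_degenerate_edges_large:
  "r \<le> n \<Longrightarrow> 2 * max_degenerate_edges r n + r * (r + 1) = 2 * r * n"
proof (induction n)
  case (Suc n)
  show ?case
  proof (cases "r \<le> n")
    case True
    then show ?thesis using Suc by (simp add: max_degenerate_edges_Suc algebra_simps)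
  next
    case False
    with Suc.prems have "r = Suc n" by simp
    with max_degenerate_edges_small[of n r] show ?thesis
      by (simp add: max_degenerate_edges_Suc algebra_simps)
  qed
qed (simp add: max_degenerate_edges_def)

lemma sum_card_filter_swap:
  assumes "finite A" "finite B" "\<And>a b. F a b \<Longrightarrow> F b a"
  shows "(\<Sum>a\<in>A. card {b\<in>B. F a b}) = (\<Sum>b\<in>B. card {a\<in>A. F b a})"
proof -
  have "(\<Sum>a\<in>A. card {b\<in>B. F a b}) = (\<Sum>b\<in>B. card {a\<in>A. F a b})"
    using sum.swap_restrict[OF assms(1,2), of "\<lambda>_ _. 1::nat" F] by simp
  also have "\<dots> = (\<Sum>b\<in>B. card {a\<in>A. F b a})"
    using assms(3) by (intro sum.cong refl arg_cong[where f=card]) blast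
  finally show ?thesis .
qed

lemma sum_card_filter_Un:
  assumes "finite A" "finite B" "A \<inter> B = {}"
  shows "(\<Sum>x\<in>C. card {b\<in>A \<union> B. F x b})
    = (\<Sum>x\<in>C. card {b\<in>A. F x b}) + (\<Sum>x\<in>C. card {b\<in>B. F x b})"
proof -
  have "card {b\<in>A \<union> B. F x b} = card {b\<in>A. F x b} + card {b\<in>B. F x b}" for x
  proof -
    have "{b\<in>A \<union> B. F x b} = {b\<in>A. F x b} \<union> {b\<in>B. F x b}" by blast
    then show ?thesis using assms by (simp add: card_Un_disjoint disjoint_iff)
  qed
  then show ?thesis by (simp add: sum.distrib)
qed

lemma degree_sum_remove:
  assumes "finite X" "v \<in> X" "\<And>a b. F a b \<Longrightarrow> F b a" "\<not> F v v"
  shows "degree_sum F X = degree_sum F (X - {v}) + 2 * card {u\<in>X. F v u}"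
proof -
  have X: "X = (X - {v}) \<union> {v}" using assms(2) by blast
  have "degree_sum F X = card {u\<in>X. F v u} + (\<Sum>a\<in>X - {v}. card {b\<in>X. F a b})"
    unfolding degree_sum_def using assms(1,2) by (simp add: sum.remove)
  also have "(\<Sum>a\<in>X - {v}. card {b\<in>X. F a b})
      = degree_sum F (X - {v}) + (\<Sum>a\<in>X - {v}. card {b\<in>{v}. F a b})"
  proof -
    have "(\<Sum>a\<in>X - {v}. card {b\<in>(X - {v}) \<union> {v}. F a b})
        = degree_sum F (X - {v}) + (\<Sum>a\<in>X - {v}. card {b\<in>{v}. F a b})"
      unfolding degree_sum_def using assms(1) by (intro sum_card_filter_Un) auto
    then show ?thesis by (simp only: flip: X)
  qed
  also have "(\<Sum>a\<in>X - {v}. card {b\<in>{v}. F a b}) = card {a\<in>X - {v}. F v a}"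
    using sum_card_filter_swap[of "X - {v}" "{v}" F] assms(1,3) by simp
  also have "{a\<in>X - {v}. F v a} = {u\<in>X. F v u}"
    using assms(4) by blast
  finally show ?thesis by simp
qed

lemma degree_sum_add_edge:
  assumes "finite X" "x \<in> X" "y \<in> X" "x \<noteq> y" "\<not> F x y"
    and "\<And>a b. F a b \<Longrightarrow> F b a" "\<And>a. \<not> F a a"
  shows "degree_sum (add_edge F x y) X = degree_sum F X + 2"
proof -
  let ?G = "add_edge F x y"
  have "degree_sum ?G X = degree_sum ?G (X - {x}) + 2 * card {u\<in>X. ?G x u}"
    using assms by (intro degree_sum_remove) (auto simp: add_edge_def)
  also have "degree_sum ?G (X - {x}) = degree_sum F (X - {x})"
    unfolding degree_sum_def add_edge_def by (intro sum.cong refl arg_cong[where f=card]) auto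
  also have "{u\<in>X. ?G x u} = insert y {u\<in>X. F x u}"
    using assms(3,4) unfolding add_edge_def by auto
  also have "card (insert y {u\<in>X. F x u}) = Suc (card {u\<in>X. F x u})"
    using assms(1,5) by simp
  also have "degree_sum F (X - {x}) + 2 * Suc (card {u\<in>X. F x u}) = degree_sum F X + 2"
    using degree_sum_remove[of X x F] assms by simp
  finally show ?thesis .
qed

lemma degenerate_subset: "degenerate X F r \<Longrightarrow> Y \<subseteq> X \<Longrightarrow> degenerate Y F r"
  unfolding degenerate_def by blast

lemma degree_sum_degenerate_le:
  assumes "finite X" "degenerate X F r" "\<And>a b. F a b \<Longrightarrow> F b a" "\<And>a. \<not> F a a"
  shows "degree_sum F X \<le> 2 * max_degenerate_edges r (card X)"
  using assms(1,2)
proof (induction "card X" arbitrary: X)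
  case 0
  then show ?case by (simp add: degree_sum_def)
next
  case (Suc n)
  have "X \<noteq> {}" using Suc.hyps(2) by auto
  then obtain v where v: "v \<in> X" "card {u\<in>X. F v u} \<le> r"
    using Suc.prems(2) unfolding degenerate_def by blast
  have n: "card (X - {v}) = n" using Suc.hyps(2) Suc.prems(1) v(1) by simp
  have "card {u\<in>X. F v u} \<le> card (X - {v})"
    using Suc.prems(1) assms(4) by (intro card_mono) auto
  moreover have "degree_sum F (X - {v}) \<le> 2 * max_degenerate_edges r n"
    using Suc.hyps(1)[OF n[symmetric]] Suc.prems(1)
      degenerate_subset[OF Suc.prems(2), of "X - {v}"] n by auto
  moreover have "degree_sum F X = degree_sum F (X - {v}) + 2 * card {u\<in>X. F v u}"
    using Suc.prems(1) v(1) assms(3,4) by (rule degree_sum_remove)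
  ultimately show ?case
    using v(2) n by (simp add: max_degenerate_edges_Suc flip: Suc.hyps(2))
qed

lemma degenerate_add_edge_low_degree:
  assumes "finite X" "degenerate X F r" "v \<in> X" "card {w\<in>X. F v w} < r"
  shows "degenerate X (add_edge F v u) r"
  unfolding degenerate_def
proof (intro allI impI)
  fix Y assume Y: "Y \<subseteq> X \<and> Y \<noteq> {}"
  show "\<exists>w\<in>Y. card {x\<in>Y. add_edge F v u w x} \<le> r"
  proof (cases "v \<in> Y")
    case True
    have "{x\<in>Y. add_edge F v u v x} \<subseteq> insert u {w\<in>X. F v w}"
      using Y by (auto simp: add_edge_def)
    then have "card {x\<in>Y. add_edge F v u v x} \<le> card (insert u {w\<in>X. F v w})"
      using assms(1) by (intro card_mono) auto
    also have "\<dots> \<le> r" using assms(1,4) by (simp add: card_insert_if)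
    finally show ?thesis using True by blast
  next
    case False
    obtain w where w: "w \<in> Y" "card {x\<in>Y. F w x} \<le> r"
      using assms(2) Y unfolding degenerate_def by blast
    have "{x\<in>Y. add_edge F v u w x} = {x\<in>Y. F w x}"
      using False w(1) unfolding add_edge_def by auto
    then have "card {x\<in>Y. add_edge F v u w x} \<le> r" using w(2) by simp
    with w(1) show ?thesis by blast
  qed
qed

lemma maximal_degenerate_low_degree:
  assumes "finite X" "maximal_degenerate X F r" "\<And>a. \<not> F a a"
    and "v \<in> X" "card {u\<in>X. F v u} \<le> r"
  shows "card {u\<in>X. F v u} = min r (card X - 1)"
  \<comment> \<open>otherwise an edge at v could be added without destroying r-degeneracy\<close>
proof (rule ccontr)
  assume ne: "card {u\<in>X. F v u} \<noteq> min r (card X - 1)"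
  have sub: "{u\<in>X. F v u} \<subseteq> X - {v}" using assms(3) by auto
  then have "card {u\<in>X. F v u} \<le> card (X - {v})" using assms(1) by (intro card_mono) auto
  moreover have "card (X - {v}) = card X - 1" using assms(1,4) by simp
  ultimately have lt: "card {u\<in>X. F v u} < r" "card {u\<in>X. F v u} < card (X - {v})"
    using ne assms(5) by linarith+
  from lt(2) have "{u\<in>X. F v u} \<noteq> X - {v}" by (metis less_irrefl)
  then obtain u where u: "u \<in> X" "u \<noteq> v" "\<not> F v u"
    using sub by blast
  have "degenerate X F r" using assms(2) unfolding maximal_degenerate_def by blast
  then have "degenerate X (add_edge F v u) r"
    using assms(1,4) lt by (intro degenerate_add_edge_low_degree) auto
  moreover have "\<not> degenerate X (add_edge F v u) r"
    using assms(2,4) u unfolding maximal_degenerate_def by metis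
  ultimately show False by blast
qed

lemma maximal_degenerate_Diff:
  assumes "finite X" "maximal_degenerate X F r" "v \<in> X" "card {u\<in>X. F v u} \<le> r"
  shows "maximal_degenerate (X - {v}) F r"
  unfolding maximal_degenerate_def
proof (intro conjI ballI impI)
  have "degenerate X F r" using assms(2) unfolding maximal_degenerate_def by blast
  then show "degenerate (X - {v}) F r" by (rule degenerate_subset) blast
next
  fix x y assume xy: "x \<in> X - {v}" "y \<in> X - {v}" "x \<noteq> y \<and> \<not> F x y"
  then have "\<not> degenerate X (add_edge F x y) r"
    using assms(2) unfolding maximal_degenerate_def by blast
  then obtain Y where Y: "Y \<subseteq> X" "Y \<noteq> {}" "\<forall>w\<in>Y. r < card {z\<in>Y. add_edge F x y w z}"
    unfolding degenerate_def by (auto simp: not_le)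
  have "v \<notin> Y"
  proof
    assume "v \<in> Y"
    have "{z\<in>Y. add_edge F x y v z} \<subseteq> {u\<in>X. F v u}"
      using Y(1) xy unfolding add_edge_def by auto
    then have "card {z\<in>Y. add_edge F x y v z} \<le> card {u\<in>X. F v u}"
      using assms(1) by (intro card_mono) auto
    moreover have "r < card {z\<in>Y. add_edge F x y v z}" using Y(3) \<open>v \<in> Y\<close> by blast
    ultimately show False using assms(4) by linarith
  qed
  with Y(1) have "Y \<subseteq> X - {v}" by blast
  show "\<not> degenerate (X - {v}) (add_edge F x y) r"
  proof
    assume "degenerate (X - {v}) (add_edge F x y) r"
    then obtain w where w: "w \<in> Y" "card {z\<in>Y. add_edge F x y w z} \<le> r"
      using \<open>Y \<subseteq> X - {v}\<close> Y(2) unfolding degenerate_def by blast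
    moreover have "r < card {z\<in>Y. add_edge F x y w z}" using Y(3) w(1) by blast
    ultimately show False by linarith
  qed
qed

lemma degree_sum_maximal_degenerate:
  assumes "finite X" "maximal_degenerate X F r" "\<And>a b. F a b \<Longrightarrow> F b a" "\<And>a. \<not> F a a"
  shows "degree_sum F X = 2 * max_degenerate_edges r (card X)"
  using assms(1,2)
proof (induction "card X" arbitrary: X)
  case 0
  then show ?case by (simp add: degree_sum_def max_degenerate_edges_def)
next
  case (Suc n)
  have "X \<noteq> {}" using Suc.hyps(2) by auto
  moreover have "degenerate X F r"
    using Suc.prems(2) unfolding maximal_degenerate_def by blast
  ultimately obtain v where v: "v \<in> X" "card {u\<in>X. F v u} \<le> r"
    unfolding degenerate_def by blast
  have n: "card (X - {v}) = n" using Suc.hyps(2) Suc.prems(1) v(1) by simp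
  have "card {u\<in>X. F v u} = min r n"
    using maximal_degenerate_low_degree[OF Suc.prems assms(4) v] Suc.hyps(2) by simp
  moreover have "degree_sum F (X - {v}) = 2 * max_degenerate_edges r n"
    using Suc.hyps(1)[OF n[symmetric]] Suc.prems(1) maximal_degenerate_Diff[OF Suc.prems v] n
    by auto
  moreover have "degree_sum F X = degree_sum F (X - {v}) + 2 * card {u\<in>X. F v u}"
    using Suc.prems(1) v(1) assms(3,4) by (rule degree_sum_remove)
  ultimately show ?case by (simp add: max_degenerate_edges_Suc flip: Suc.hyps(2))
qed

lemma maximal_degenerate_iff_degree_sum:
  assumes "finite X" "degenerate X F r" "\<And>a b. F a b \<Longrightarrow> F b a" "\<And>a. \<not> F a a"
  shows "maximal_degenerate X F r \<longleftrightarrow> degree_sum F X = 2 * max_degenerate_edges r (card X)"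
proof
  assume "maximal_degenerate X F r"
  then show "degree_sum F X = 2 * max_degenerate_edges r (card X)"
    using assms by (intro degree_sum_maximal_degenerate)
next
  assume eq: "degree_sum F X = 2 * max_degenerate_edges r (card X)"
  show "maximal_degenerate X F r"
    unfolding maximal_degenerate_def
  proof (intro conjI ballI impI notI assms(2))
    fix x y assume xy: "x \<in> X" "y \<in> X" "x \<noteq> y \<and> \<not> F x y"
      and "degenerate X (add_edge F x y) r"
    then have "degree_sum (add_edge F x y) X \<le> 2 * max_degenerate_edges r (card X)"
      using assms by (intro degree_sum_degenerate_le) (auto simp: add_edge_def)
    moreover have "degree_sum (add_edge F x y) X = degree_sum F X + 2"
      using assms xy by (intro degree_sum_add_edge) auto
    ultimately show False using eq by simp
  qed
qed

lemma conv_step_iter_subset: "S \<subseteq> V \<Longrightarrow> (conv_step V E k ^^ t) S \<subseteq> V"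
  by (induction t) (auto simp: conv_step_def)

lemma conversion_set_complement_degenerate:
  assumes "finite V" "\<forall>v\<in>V. card (nbrs V E v) \<le> k + r" "conversion_set V E k S"
  shows "degenerate (V - S) (induced E (V - S)) r"
  unfolding degenerate_def
proof (intro allI impI)
  fix Y assume Y: "Y \<subseteq> V - S \<and> Y \<noteq> {}"
  let ?S = "\<lambda>t. (conv_step V E k ^^ t) S"
  have SV: "S \<subseteq> V" using assms(3) unfolding conversion_set_def by blast
  obtain t\<^sub>V where "?S t\<^sub>V = V" using assms(3) unfolding conversion_set_def by blast
  then have "\<exists>t. ?S t \<inter> Y \<noteq> {}" using Y by blast
  then obtain t where t: "?S t \<inter> Y \<noteq> {}" "\<forall>i<t. ?S i \<inter> Y = {}"
    using exists_least_iff[of "\<lambda>t. ?S t \<inter> Y \<noteq> {}"] by blast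
  have "t \<noteq> 0" using t(1) Y by auto
  then obtain i where i: "t = Suc i" using not0_implies_Suc by blast
  define X where "X = ?S i"
  have XY: "X \<inter> Y = {}" using t(2) i unfolding X_def by simp
  have XV: "X \<subseteq> V" unfolding X_def using SV by (rule conv_step_iter_subset)
  obtain v where v: "v \<in> conv_step V E k X" "v \<in> Y"
    using t(1) i unfolding X_def by auto
  then have vV: "v \<in> V" and conv: "k \<le> card {u\<in>X. E v u}"
    using XY unfolding conv_step_def by auto
  have "card {u\<in>X. E v u} + card {u\<in>Y. E v u} = card ({u\<in>X. E v u} \<union> {u\<in>Y. E v u})"
    using XV Y XY assms(1) by (intro card_Un_disjoint[symmetric]) (auto intro: finite_subset)
  also have "\<dots> \<le> card (nbrs V E v)"
    using XV Y assms(1) unfolding nbrs_def by (intro card_mono) auto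
  also have "\<dots> \<le> k + r" using assms(2) vV by blast
  finally have "card {u\<in>Y. E v u} \<le> r" using conv by linarith
  moreover have "{u\<in>Y. induced E (V - S) v u} = {u\<in>Y. E v u}"
    using Y v(2) unfolding induced_def by auto
  ultimately have "card {u\<in>Y. induced E (V - S) v u} \<le> r" by simp
  with v(2) show "\<exists>v\<in>Y. card {u\<in>Y. induced E (V - S) v u} \<le> r" by blast
qed

lemma regular_degree_sum_balance:
  assumes "graph V E" "regular V E d" "S \<subseteq> V"
  shows "d * card S + degree_sum E (V - S) = d * card (V - S) + degree_sum E S"
proof -
  have fin: "finite S" "finite (V - S)"
    using assms(1,3) finite_subset unfolding graph_def by auto
  have sym: "\<And>a b. E a b \<Longrightarrow> E b a" using assms(1) unfolding graph_def by blast
  have split: "S \<union> (V - S) = V" using assms(3) by blast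
  have deg: "card {b\<in>S \<union> (V - S). E a b} = d" if "a \<in> V" for a
    using assms(2) that unfolding split regular_def nbrs_def by blast
  define B where "B = (\<Sum>a\<in>S. card {b\<in>V - S. E a b})"
  have "d * card S = (\<Sum>a\<in>S. card {b\<in>S \<union> (V - S). E a b})"
    using deg assms(3) by (simp add: subset_iff)
  also have "\<dots> = degree_sum E S + B"
    unfolding degree_sum_def B_def using fin by (intro sum_card_filter_Un) auto
  finally have count_S: "d * card S = degree_sum E S + B" .
  have "d * card (V - S) = (\<Sum>a\<in>V - S. card {b\<in>S \<union> (V - S). E a b})"
    using deg by simp
  also have "\<dots> = (\<Sum>a\<in>V - S. card {b\<in>S. E a b}) + degree_sum E (V - S)"
    unfolding degree_sum_def using fin by (intro sum_card_filter_Un) auto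
  also have "(\<Sum>a\<in>V - S. card {b\<in>S. E a b}) = B"
    unfolding B_def using fin(2,1) sym by (rule sum_card_filter_swap)
  finally show ?thesis using count_S by simp
qed

lemma degree_sum_induced: "degree_sum (induced E W) W = degree_sum E W"
  unfolding degree_sum_def induced_def by (intro sum.cong refl arg_cong[where f=card]) auto

lemma independent_iff_degree_sum_eq_0: "finite S \<Longrightarrow> independent E S \<longleftrightarrow> degree_sum E S = 0"
  unfolding independent_def degree_sum_def by auto

lemma regular_degree_less_card:
  assumes "graph V E" "V \<noteq> {}" "regular V E d"
  shows "d < card V"
proof -
  obtain v where v: "v \<in> V" using assms(2) by blast
  have fin: "finite V" using assms(1) unfolding graph_def by blast
  have "d = card (nbrs V E v)" using assms(3) v unfolding regular_def by simp
  also have "\<dots> \<le> card (V - {v})"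
    using assms(1) fin unfolding graph_def nbrs_def by (intro card_mono) auto
  also have "\<dots> < card V" using fin v by (rule card_Diff1_less)
  finally show ?thesis .
qed

lemma conversion_bound_arith:
  fixes k r s n a b g :: real
  assumes "0 \<le> r" "r < k" "0 \<le> a" "b \<le> g"
    and balance: "(k + r) * s + b = (k + r) * n + a"
    and size: "k + r + 1 \<le> s + n"
    and large: "r \<le> n \<Longrightarrow> g + r * (r + 1) = 2 * r * n"
    and small: "n < r \<Longrightarrow> g + n = n * n"
  shows "((k - r) * (s + n) + (r + 1) * r) / (2 * k) \<le> s \<and>
    (s = ((k - r) * (s + n) + (r + 1) * r) / (2 * k) \<longleftrightarrow> a = 0 \<and> b = g)"
proof -
  define D where "D = 2 * k * s - ((k - r) * (s + n) + (r + 1) * r)"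
  have D: "D = a - b + 2 * r * n - r * (r + 1)"
    using balance unfolding D_def by (simp add: algebra_simps)
  have "0 \<le> D \<and> (D = 0 \<longleftrightarrow> a = 0 \<and> b = g)"
  proof (cases "r \<le> n")
    case True
    then show ?thesis using D large assms(3,4) by auto
  next
    case False
    have "(k + r) * (k + r + 1 - n) \<le> (k + r) * s"
      using size assms(1,2) by (intro mult_left_mono) auto
    moreover have "0 < k * (k + 2 * r + 1 - 2 * n)"
      using False assms(1,2) by (intro mult_pos_pos) auto
    ultimately have "0 < D" unfolding D_def by (simp add: algebra_simps)
    moreover have "D < 0" if "a = 0" "b = g"
    proof -
      have "0 < (r - n) * (r - n + 1)" using False by (intro mult_pos_pos) auto
      then show ?thesis using D small False that by (simp add: algebra_simps)
    qed
    ultimately show ?thesis by auto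
  qed
  moreover have "0 < 2 * k" using assms(1,2) by simp
  ultimately show ?thesis unfolding D_def by (auto simp: field_simps)
qed

lemma conversion_bound_arith_nat:
  fixes k r s n a b g :: nat
  assumes "r < k" "b \<le> g"
    and balance: "(k + r) * s + b = (k + r) * n + a"
    and size: "k + r + 1 \<le> s + n"
    and large: "r \<le> n \<Longrightarrow> g + r * (r + 1) = 2 * r * n"
    and small: "n \<le> r \<Longrightarrow> g + n = n * n"
  shows "(real (k - r) * real (s + n) + real ((r + 1) * r)) / (2 * real k) \<le> real s \<and>
    (real s = (real (k - r) * real (s + n) + real ((r + 1) * r)) / (2 * real k) \<longleftrightarrow>
      a = 0 \<and> b = g)"
proof -
  have "real (k - r) = real k - real r" "real (s + n) = real s + real n"
    "real ((r + 1) * r) = (real r + 1) * real r"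
    using assms(1) by (auto simp: algebra_simps)
  moreover have "((real k - real r) * (real s + real n) + (real r + 1) * real r) / (2 * real k)
      \<le> real s \<and>
    (real s = ((real k - real r) * (real s + real n) + (real r + 1) * real r) / (2 * real k)
      \<longleftrightarrow> real a = 0 \<and> real b = real g)"
  proof (rule conversion_bound_arith)
    show "(real k + real r) * real s + real b = (real k + real r) * real n + real a"
      using arg_cong[OF balance, of real] by simp
    show "real g + real r * (real r + 1) = 2 * real r * real n" if "real r \<le> real n"
      using arg_cong[OF large, of real] that by (simp add: algebra_simps)
    show "real g + real n = real n * real n" if "real n < real r"
      using arg_cong[OF small, of real] that by simp
  qed (use assms(1,2) size in auto)
  ultimately show ?thesis by (simp only: of_nat_eq_0_iff of_nat_eq_iff)
qed

lemma conversion_set_card_bound: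
  assumes "graph V E" "V \<noteq> {}" "r < k" "regular V E (k + r)" "conversion_set V E k S"
  shows "(real (k - r) * real (card V) + real ((r + 1) * r)) / (2 * real k) \<le> real (card S) \<and>
    (real (card S) = (real (k - r) * real (card V) + real ((r + 1) * r)) / (2 * real k) \<longleftrightarrow>
      independent E S \<and> maximal_degenerate (V - S) (induced E (V - S)) r)"
proof -
  define W where "W = V - S"
  have finV: "finite V" and sym: "\<And>a b. induced E W a b \<Longrightarrow> induced E W b a"
    and irrefl: "\<And>a. \<not> induced E W a a"
    using assms(1) unfolding graph_def induced_def by auto
  have SV: "S \<subseteq> V" using assms(5) unfolding conversion_set_def by blast
  have finS: "finite S" and finW: "finite W"
    using finV SV finite_subset unfolding W_def by auto
  have cardV: "card V = card S + card W"
    using card_Diff_subset[OF finS SV] card_mono[OF finV SV] unfolding W_def by simp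
  have degW: "degenerate W (induced E W) r"
    using conversion_set_complement_degenerate[OF finV _ assms(5)] assms(4)
    unfolding W_def regular_def by simp
  have balance: "(k + r) * card S + degree_sum E W = (k + r) * card W + degree_sum E S"
    using regular_degree_sum_balance[OF assms(1,4) SV] unfolding W_def .
  have bound: "degree_sum E W \<le> 2 * max_degenerate_edges r (card W)"
    using degree_sum_degenerate_le[OF finW degW sym irrefl] unfolding degree_sum_induced .
  have maximal: "maximal_degenerate W (induced E W) r
      \<longleftrightarrow> degree_sum E W = 2 * max_degenerate_edges r (card W)"
    using maximal_degenerate_iff_degree_sum[OF finW degW sym irrefl]
    unfolding degree_sum_induced .
  have size: "k + r + 1 \<le> card S + card W"
    using regular_degree_less_card[OF assms(1,2,4)] cardV by simp
  show ?thesis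
    unfolding cardV W_def[symmetric] maximal independent_iff_degree_sum_eq_0[OF finS]
    using conversion_bound_arith_nat[OF assms(3) bound balance size
        max_degenerate_edges_large max_degenerate_edges_small] .
qed

lemma min_conversion_set_exists:
  assumes "finite V"
  shows "\<exists>S. min_conversion_set V E k S"
proof -
  let ?C = "{card S |S. conversion_set V E k S}"
  have "finite ?C"
    by (rule finite_subset[of _ "card ` Pow V"]) (auto simp: conversion_set_def assms)
  moreover have "conversion_set V E k V"
    unfolding conversion_set_def by (auto intro: exI[of _ 0])
  then have "?C \<noteq> {}" by blast
  ultimately have "Min ?C \<in> ?C" by (rule Min_in)
  then show ?thesis unfolding min_conversion_set_def conv_number_def by auto
qed

theorem proposition4p3:
  fixes V :: "'a set" and E :: "'a \<Rightarrow> 'a \<Rightarrow> bool" and k r :: nat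
  assumes "graph V E" and "V \<noteq> {}"
    and "r < k"
    and "regular V E (k + r)"
  shows "real (conv_number V E k)
           \<ge> (real (k - r) * real (card V) + real ((r + 1) * r)) / (2 * real k)
    \<and> (\<forall>S. r \<ge> 1 \<longrightarrow> min_conversion_set V E k S \<longrightarrow>
           (real (card S) = (real (k - r) * real (card V) + real ((r + 1) * r)) / (2 * real k)
            \<longleftrightarrow> independent E S \<and> maximal_degenerate (V - S) (induced E (V - S)) r))"
proof -
  \<comment> \<open>the characterisation of equality holds for r = 0 as well\<close>
  have "finite V" using assms(1) unfolding graph_def by blast
  then obtain S where S: "min_conversion_set V E k S"
    using min_conversion_set_exists by blast
  then have "conv_number V E k = card S" "conversion_set V E k S"
    unfolding min_conversion_set_def by simp_all
  then have "real (conv_number V E k)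
      \<ge> (real (k - r) * real (card V) + real ((r + 1) * r)) / (2 * real k)"
    using conversion_set_card_bound[OF assms] by simp
  moreover have "real (card S) = (real (k - r) * real (card V) + real ((r + 1) * r)) / (2 * real k)
      \<longleftrightarrow> independent E S \<and> maximal_degenerate (V - S) (induced E (V - S)) r"
    if "min_conversion_set V E k S" for S
    using that conversion_set_card_bound[OF assms] unfolding min_conversion_set_def by blast
  ultimately show ?thesis by blast
qed

end
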